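(* Let $n\ge2$ and let $\xi_n:S^1\to M_n(\mathbb C)$ be given by $\xi_n(z)_{ij}=z^{j-i}$ ($1\le i,j\le n$). Then $\xi_n$ is entangled in $C(S^1)^{(n)}\otimes_{\min}C(S^1)_{(n)}$: it is positive there, but there do not exist $k\in\mathbb N$, positive semidefinite Toeplitz matrices $t_1,\dots,t_k\in C(S^1)^{(n)}$ and functions $f_1,\dots,f_k\in C(S^1)_{(n)}$ with $f_j(z)\ge0$ for all $z$, such that $\xi_n=\sum_{j=1}^k t_j\otimes f_j$.
   Context: $C(S^1)^{(n)}\subseteq M_n(\mathbb C)$ is the space of Toeplitz matrices $[\tau_{k-\ell}]$. $C(S^1)_{(n)}$ is the operator system of continuous functions $f$ on the unit circle $S^1$ with Fourier coefficients $\hat f(k)=0$ for $|k|\ge n$, positivity being pointwise. $C(S^1)^{(n)}\otimes_{\min}C(S^1)_{(n)}$ is identified with continuous functions $F:S^1\to C(S^1)^{(n)}$ with entries in $C(S^1)_{(n)}$ (via $t\otimes f\leftrightarrow z\mapsto f(z)t$), positive iff $F(z)$ is positive semidefinite for each $z$. *)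

theory Defs
  imports "HOL-Analysis.Analysis"
begin

text \<open>n x n complex matrices are represented as functions nat => nat => complex,
  with indices 0..n-1 (the paper uses 1..n; only differences of indices matter).\<close>

definition psd_mat :: "nat \<Rightarrow> (nat \<Rightarrow> nat \<Rightarrow> complex) \<Rightarrow> bool" where
  "psd_mat n A \<longleftrightarrow> (\<forall>v :: nat \<Rightarrow> complex.
      let q = (\<Sum>i<n. \<Sum>j<n. cnj (v i) * A i j * v j) in Im q = 0 \<and> Re q \<ge> 0)"

definition toeplitz_mat :: "nat \<Rightarrow> (nat \<Rightarrow> nat \<Rightarrow> complex) \<Rightarrow> bool" where
  "toeplitz_mat n A \<longleftrightarrow> (\<exists>\<tau> :: int \<Rightarrow> complex. \<forall>k<n. \<forall>l<n. A k l = \<tau> (int k - int l))"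

definition fourier_coeff :: "(complex \<Rightarrow> complex) \<Rightarrow> int \<Rightarrow> complex" where
  "fourier_coeff f k = integral {0..2*pi} (\<lambda>\<theta>. f (cis \<theta>) * cis (- of_int k * \<theta>)) / (2 * pi)"

definition trig_sys :: "nat \<Rightarrow> (complex \<Rightarrow> complex) set" where
  "trig_sys n = {f. continuous_on (sphere 0 1) f \<and> (\<forall>k. \<bar>k\<bar> \<ge> int n \<longrightarrow> fourier_coeff f k = 0)}"

definition xi :: "complex \<Rightarrow> nat \<Rightarrow> nat \<Rightarrow> complex" where
  "xi z i j = z powi (int j - int i)"

end

theory Submission
  imports Defs "HOL-Computational_Algebra.Polynomial" "HOL-Library.Complex_Order"
begin

text \<open>Positivity of \<open>\<xi>\<^sub>n\<close> is the Gram identity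
  \<open>v\<^sup>* \<xi>\<^sub>n(z) v = |\<Sum>\<^sub>j v\<^sub>j z\<^sup>j|\<^sup>2\<close>. For separability, test
  \<open>\<xi>\<^sub>n(z) = \<Sum>\<^sub>j f\<^sub>j(z) t\<^sub>j\<close> against \<open>v = e\<^sub>0 - conj(z\<^sup>m) e\<^sub>m\<close>, \<open>m = n - 1\<close>:
  the left side gives 0 and every summand is \<open>\<ge> 0\<close>, so each \<open>f\<^sub>j(z) (v\<^sup>* t\<^sub>j v)\<close>
  vanishes. Because \<open>t\<^sub>j\<close> is Toeplitz, \<open>z\<^sup>m (v\<^sup>* t\<^sub>j v)\<close> is a polynomial in \<open>z\<close>
  whose coefficient of \<open>z\<^sup>m\<close> is \<open>2 (t\<^sub>j)\<^sub>0\<^sub>0\<close>; choosing \<open>z\<close> off its finitely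
  many roots forces \<open>f\<^sub>j(z) (t\<^sub>j)\<^sub>0\<^sub>0 = 0\<close> for all \<open>j\<close>, contradicting
  \<open>\<xi>\<^sub>n(z)\<^sub>0\<^sub>0 = 1\<close>.\<close>

lemma infinite_unit_circle: "infinite (sphere (0::complex) 1)"
proof
  assume "finite (sphere (0::complex) 1)"
  moreover have "connected (sphere (0::complex) 1)" by (rule connected_sphere) simp
  ultimately have "sphere (0::complex) 1 = {} \<or> (\<exists>a. sphere (0::complex) 1 = {a})"
    using connected_finite_iff_sing by blast
  moreover have "1 \<in> sphere (0::complex) 1" "-1 \<in> sphere (0::complex) 1" by auto
  ultimately show False by (metis empty_iff singletonD one_neq_neg_one)
qed

lemma unit_complex_mult_cnj: "cmod z = 1 \<Longrightarrow> z * cnj z = 1"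
  using complex_norm_square[of z] by simp

lemma unit_complex_power_mult_cnj: "cmod z = 1 \<Longrightarrow> z ^ m * cnj z ^ m = 1"
  by (metis unit_complex_mult_cnj power_mult_distrib power_one)

definition quad_form :: "nat \<Rightarrow> (nat \<Rightarrow> nat \<Rightarrow> complex) \<Rightarrow> (nat \<Rightarrow> complex) \<Rightarrow> complex" where
  "quad_form n A v = (\<Sum>i<n. \<Sum>j<n. cnj (v i) * A i j * v j)"

lemma psd_mat_iff_quad_form_nonneg: "psd_mat n A \<longleftrightarrow> (\<forall>v. quad_form n A v \<ge> 0)"
  by (auto simp: psd_mat_def quad_form_def less_eq_complex_def Let_def)

lemma quad_form_cong:
  "(\<And>i j. i < n \<Longrightarrow> j < n \<Longrightarrow> A i j = B i j) \<Longrightarrow> quad_form n A v = quad_form n B v"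
  by (simp add: quad_form_def)

lemma quad_form_sum:
  "quad_form n (\<lambda>i j. \<Sum>l\<in>L. c l * A l i j) v = (\<Sum>l\<in>L. c l * quad_form n (A l) v)"
  unfolding quad_form_def sum_distrib_left sum_distrib_right
  by (subst sum.swap, rule sum.cong, simp, subst sum.swap) (simp add: mult_ac)

lemma nonneg_combination_quad_form_zero:
  assumes "finite L"
    and "\<And>l. l \<in> L \<Longrightarrow> c l \<ge> 0"
    and "\<And>l. l \<in> L \<Longrightarrow> psd_mat n (A l)"
    and "quad_form n (\<lambda>i j. \<Sum>l\<in>L. c l * A l i j) v = 0"
    and "l \<in> L"
  shows "c l * quad_form n (A l) v = 0"
proof -
  have nonneg: "c l * quad_form n (A l) v \<ge> 0" if "l \<in> L" for l
    using assms(2,3)[OF that] by (intro mult_nonneg_nonneg) (simp_all add: psd_mat_iff_quad_form_nonneg)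
  have "(\<Sum>l\<in>L. c l * quad_form n (A l) v) = 0"
    using assms(4) unfolding quad_form_sum .
  then show ?thesis
    using sum_nonneg_eq_0_iff[of L "\<lambda>l. c l * quad_form n (A l) v"] assms(1,5) nonneg by blast
qed

lemma quad_form_two_support:
  assumes "p < n" "q < n" "p \<noteq> q"
  shows "quad_form n A (\<lambda>i. if i = p then a else if i = q then b else 0)
    = cnj a * A p p * a + cnj a * A p q * b + cnj b * A q p * a + cnj b * A q q * b"
proof -
  have restrict: "(\<Sum>i<n. g i) = g p + g q" if "\<And>i. i \<noteq> p \<Longrightarrow> i \<noteq> q \<Longrightarrow> g i = 0"
    for g :: "nat \<Rightarrow> complex"
  proof -
    have "(\<Sum>i<n. g i) = (\<Sum>i\<in>{p, q}. g i)"
      using assms that by (intro sum.mono_neutral_right) auto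
    then show ?thesis using assms(3) by simp
  qed
  show ?thesis
    unfolding quad_form_def using assms(3) by (simp add: restrict algebra_simps)
qed

definition corner_vec :: "nat \<Rightarrow> complex \<Rightarrow> nat \<Rightarrow> complex" where
  "corner_vec m w = (\<lambda>i. if i = 0 then 1 else if i = m then - cnj w else 0)"

lemma quad_form_corner_vec:
  assumes "0 < m" "m < n"
  shows "quad_form n A (corner_vec m w)
    = A 0 0 - A 0 m * cnj w - w * A m 0 + w * cnj w * A m m"
  using assms unfolding corner_vec_def by (simp add: quad_form_two_support algebra_simps)

lemma xi_unit_circle:
  assumes "cmod z = 1"
  shows "xi z i j = cnj (z ^ i) * z ^ j"
proof -
  have inv: "inverse z = cnj z"
    using unit_complex_mult_cnj[OF assms] by (simp add: inverse_unique)
  have "z \<noteq> 0" using assms by auto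
  then have "xi z i j = z ^ j / z ^ i" by (simp add: xi_def power_int_diff)
  then show ?thesis by (metis divide_inverse inv mult.commute power_inverse complex_cnj_power)
qed

lemma quad_form_xi:
  assumes "cmod z = 1"
  shows "quad_form n (xi z) v = of_real ((cmod (\<Sum>j<n. v j * z ^ j))\<^sup>2)"
proof -
  let ?S = "\<Sum>j<n. v j * z ^ j"
  have "quad_form n (xi z) v = (\<Sum>i<n. \<Sum>j<n. cnj (v i * z ^ i) * (v j * z ^ j))"
    by (simp add: quad_form_def xi_unit_circle[OF assms] mult_ac)
  also have "\<dots> = cnj ?S * ?S" by (simp add: sum_product)
  finally show ?thesis using complex_norm_square[of ?S] by (simp add: mult.commute)
qed

lemma psd_mat_xi: "cmod z = 1 \<Longrightarrow> psd_mat n (xi z)"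
  by (simp add: psd_mat_iff_quad_form_nonneg quad_form_xi less_eq_complex_def)

lemma quad_form_xi_corner_vec:
  assumes "cmod z = 1" "0 < m" "m < n"
  shows "quad_form n (xi z) (corner_vec m (z ^ m)) = 0"
  using assms
  by (simp add: quad_form_corner_vec xi_unit_circle unit_complex_power_mult_cnj algebra_simps)

text \<open>\<open>z\<^sup>m\<close> times the quadratic form of a Toeplitz matrix \<open>A\<close> at \<open>corner_vec m (z\<^sup>m)\<close>,
  for \<open>|z| = 1\<close>; the Toeplitz condition enters through \<open>A\<^sub>m\<^sub>m = A\<^sub>0\<^sub>0\<close>.\<close>
definition corner_poly :: "(nat \<Rightarrow> nat \<Rightarrow> complex) \<Rightarrow> nat \<Rightarrow> complex poly" where
  "corner_poly A m = monom (- A m 0) (2 * m) + monom (2 * A 0 0) m + [:- A 0 m:]"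

lemma corner_poly_nonzero: "0 < m \<Longrightarrow> A 0 0 \<noteq> 0 \<Longrightarrow> corner_poly A m \<noteq> 0"
proof
  assume "0 < m" "A 0 0 \<noteq> 0" "corner_poly A m = 0"
  then have "coeff (corner_poly A m) m = 0" by simp
  with \<open>0 < m\<close> \<open>A 0 0 \<noteq> 0\<close> show False
    by (cases m) (simp_all add: corner_poly_def coeff_pCons)
qed

lemma poly_corner_poly:
  assumes "toeplitz_mat n A" "0 < m" "m < n" "cmod z = 1"
  shows "poly (corner_poly A m) z = z ^ m * quad_form n A (corner_vec m (z ^ m))"
proof -
  obtain \<tau> where "\<forall>k<n. \<forall>l<n. A k l = \<tau> (int k - int l)"
    using assms(1) unfolding toeplitz_mat_def by blast
  then have diag: "A m m = A 0 0" using assms(3) by simp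
  let ?w = "z ^ m"
  have unit: "z ^ m * cnj z ^ m = 1" using assms(4) by (rule unit_complex_power_mult_cnj)
  have "?w * quad_form n A (corner_vec m ?w)
      = ?w * A 0 0 - A 0 m * (?w * cnj ?w) - A m 0 * ?w\<^sup>2 + (?w * cnj ?w) * (?w * A 0 0)"
    using assms(2,3) by (simp add: quad_form_corner_vec diag algebra_simps power2_eq_square)
  also have "\<dots> = poly (corner_poly A m) z"
    by (simp add: unit corner_poly_def poly_monom power_mult[symmetric] mult.commute)
  finally show ?thesis by simp
qed

lemma xi_not_nonneg_toeplitz_combination:
  assumes unit: "cmod z = 1" and m: "0 < m" "m < n" and "finite L"
    and toep: "\<And>l. l \<in> L \<Longrightarrow> toeplitz_mat n (t l)"
    and psd: "\<And>l. l \<in> L \<Longrightarrow> psd_mat n (t l)"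
    and c_nonneg: "\<And>l. l \<in> L \<Longrightarrow> c l \<ge> 0"
    and off_roots: "\<And>l. l \<in> L \<Longrightarrow> t l 0 0 \<noteq> 0 \<Longrightarrow> poly (corner_poly (t l) m) z \<noteq> 0"
  shows "\<exists>a<n. \<exists>b<n. xi z a b \<noteq> (\<Sum>l\<in>L. c l * t l a b)"
proof (rule ccontr)
  assume "\<not> ?thesis"
  then have decomp: "\<And>a b. a < n \<Longrightarrow> b < n \<Longrightarrow> xi z a b = (\<Sum>l\<in>L. c l * t l a b)"
    by blast
  have "quad_form n (\<lambda>a b. \<Sum>l\<in>L. c l * t l a b) (corner_vec m (z ^ m))
      = quad_form n (xi z) (corner_vec m (z ^ m))"
    by (rule quad_form_cong) (simp add: decomp)
  also have "\<dots> = 0" by (rule quad_form_xi_corner_vec[OF unit m])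
  finally have decomp_form: "quad_form n (\<lambda>a b. \<Sum>l\<in>L. c l * t l a b) (corner_vec m (z ^ m)) = 0" .
  have corner_terms_zero: "c l * t l 0 0 = 0" if "l \<in> L" for l
  proof (cases "t l 0 0 = 0")
    case False
    then have "quad_form n (t l) (corner_vec m (z ^ m)) \<noteq> 0"
      using off_roots[OF that] poly_corner_poly[OF toep[OF that] m unit] by simp
    moreover have "c l * quad_form n (t l) (corner_vec m (z ^ m)) = 0"
      using nonneg_combination_quad_form_zero[OF \<open>finite L\<close> c_nonneg psd decomp_form that] .
    ultimately show ?thesis by simp
  qed simp
  have "1 = xi z 0 0" using xi_unit_circle[OF unit] by simp
  also have "\<dots> = (\<Sum>l\<in>L. c l * t l 0 0)" using decomp m by simp
  also have "\<dots> = 0" using corner_terms_zero by (intro sum.neutral) blast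
  finally show False by simp
qed

theorem corollary7p7:
  fixes n :: nat
  assumes "n \<ge> 2"
  shows "(\<forall>z\<in>sphere (0::complex) 1. psd_mat n (xi z)) \<and>
    \<not> (\<exists>(k::nat) (t :: nat \<Rightarrow> nat \<Rightarrow> nat \<Rightarrow> complex) (f :: nat \<Rightarrow> complex \<Rightarrow> complex).
          (\<forall>j<k. toeplitz_mat n (t j) \<and> psd_mat n (t j) \<and> f j \<in> trig_sys n \<and>
                 (\<forall>z\<in>sphere 0 1. Im (f j z) = 0 \<and> Re (f j z) \<ge> 0)) \<and>
          (\<forall>z\<in>sphere 0 1. \<forall>a<n. \<forall>b<n. xi z a b = (\<Sum>j<k. f j z * t j a b)))"
proof (intro conjI notI ballI)
  show "psd_mat n (xi z)" if "z \<in> sphere 0 1" for z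
    using that by (simp add: psd_mat_xi)
next
  assume "\<exists>(k::nat) t f. (\<forall>j<k. toeplitz_mat n (t j) \<and> psd_mat n (t j) \<and> f j \<in> trig_sys n \<and>
                 (\<forall>z\<in>sphere 0 1. Im (f j z) = 0 \<and> Re (f j z) \<ge> 0)) \<and>
          (\<forall>z\<in>sphere 0 1. \<forall>a<n. \<forall>b<n. xi z a b = (\<Sum>j<k. f j z * t j a b))"
  then obtain k :: nat and t f
    where toep: "\<And>j. j < k \<Longrightarrow> toeplitz_mat n (t j)"
      and psd: "\<And>j. j < k \<Longrightarrow> psd_mat n (t j)"
      and f_nonneg: "\<And>j z. j < k \<Longrightarrow> z \<in> sphere 0 1 \<Longrightarrow> Im (f j z) = 0 \<and> Re (f j z) \<ge> 0"
      and decomp: "\<And>z a b. z \<in> sphere 0 1 \<Longrightarrow> a < n \<Longrightarrow> b < n \<Longrightarrow> xi z a b = (\<Sum>j<k. f j z * t j a b)"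
    by blast
  define m where "m = n - 1"
  have m: "0 < m" "m < n" using assms by (auto simp: m_def)
  let ?roots = "\<Union>j\<in>{j. j < k \<and> t j 0 0 \<noteq> 0}. {z. poly (corner_poly (t j) m) z = 0}"
  have "finite ?roots" using corner_poly_nonzero[OF m(1)] by (auto intro: poly_roots_finite)
  from Diff_infinite_finite[OF this infinite_unit_circle]
  obtain z where z: "z \<in> sphere 0 1" "z \<notin> ?roots"
    by (auto dest!: infinite_imp_nonempty)
  have "\<exists>a<n. \<exists>b<n. xi z a b \<noteq> (\<Sum>j<k. f j z * t j a b)"
  proof (rule xi_not_nonneg_toeplitz_combination[OF _ m finite_lessThan])
    show "f j z \<ge> 0" if "j \<in> {..<k}" for j
      using f_nonneg[OF _ z(1)] that by (simp add: less_eq_complex_def)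
  qed (use z toep psd in auto)
  with decomp[OF z(1)] show False by blast
qed

end
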